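(* Let $D$ be a normalized 2-page book drawing of $K_n$ and $1\le i<j\le n$. Let $k$ be the number of entries of $M(D)$ to the right of $(i,j)$ having the same color as $(i,j)$ plus the number of entries above $(i,j)$ having the same color as $(i,j)$. Then exactly $k$ of the vertices other than $i,j$ lie on one side of the edge $ij$ (i.e., $ij$ is a $k$-edge, where possibly $k>\lfloor n/2\rfloor-1$).
   Context: Normalized 2-page book drawing of $K_n$: vertices $(1,0),\dots,(n,0)$ labelled $1,\dots,n$ left to right; edges $i(i+1)$ on the $x$-axis (spine); edge $1n$ in the upper half-plane; every other edge $ij$ a semicircle over $[i,j]$ in the upper or lower half-plane. Edges on the spine or in the upper half-plane are blue, in the lower half-plane red. $M(D)$ has entries $(i,j)$, $1\le i<j\le n$ (row $i$, column $j$), colored as edge $ij$; entries $(i',j)$ with $i'<i$ are above $(i,j)$, entries $(i,j')$ with $j'>j$ are to its right. For distinct vertices $p,q,r$, $r$ is on the left (right) of $\overrightarrow{pq}$ if the triangle with edges $pq,qr,rp$ traced in order $p,q,r$ is counterclockwise (clockwise); $pq$ is a $k$-edge if exactly $k$ of the other vertices lie on one side. *)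

theory Defs
  imports "HOL-Complex_Analysis.Winding_Numbers"
begin

text \<open>A normalized 2-page book drawing of K_n is encoded by n and a function
  up :: nat => nat => bool; for i < j with j > i+1, up i j says that the
  semicircle over [i,j] lies in the upper half-plane (else the lower one). Vertex v is the point (v,0),
  i.e. the complex number of_nat v.\<close>

definition normalized_book_drawing :: "nat \<Rightarrow> (nat \<Rightarrow> nat \<Rightarrow> bool) \<Rightarrow> bool" where
  "normalized_book_drawing n up \<longleftrightarrow> (n \<ge> 3 \<longrightarrow> up 1 n)"

definition semicircle :: "bool \<Rightarrow> nat \<Rightarrow> nat \<Rightarrow> real \<Rightarrow> complex" where
  "semicircle upper i j t =
     (of_nat i + of_nat j) / 2 - ((of_nat j - of_nat i) / 2) *
       exp (if upper then - (\<i> * of_real (pi * t)) else \<i> * of_real (pi * t))"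

definition edge_arc :: "(nat \<Rightarrow> nat \<Rightarrow> bool) \<Rightarrow> nat \<Rightarrow> nat \<Rightarrow> real \<Rightarrow> complex" where
  "edge_arc up i j =
     (if j = Suc i then linepath (of_nat i) (of_nat j) else semicircle (up i j) i j)"

definition blue :: "(nat \<Rightarrow> nat \<Rightarrow> bool) \<Rightarrow> nat \<Rightarrow> nat \<Rightarrow> bool" where
  "blue up i j \<longleftrightarrow> j = Suc i \<or> up i j"

definition edge_path :: "(nat \<Rightarrow> nat \<Rightarrow> bool) \<Rightarrow> nat \<Rightarrow> nat \<Rightarrow> real \<Rightarrow> complex" where
  "edge_path up p q = (if p < q then edge_arc up p q else reversepath (edge_arc up q p))"

definition triangle_path :: "(nat \<Rightarrow> nat \<Rightarrow> bool) \<Rightarrow> nat \<Rightarrow> nat \<Rightarrow> nat \<Rightarrow> real \<Rightarrow> complex" where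
  "triangle_path up p q r = edge_path up p q +++ edge_path up q r +++ edge_path up r p"

definition counterclockwise :: "(real \<Rightarrow> complex) \<Rightarrow> bool" where
  "counterclockwise \<gamma> \<longleftrightarrow> (\<exists>z. z \<notin> path_image \<gamma> \<and> winding_number \<gamma> z = 1)"

definition clockwise :: "(real \<Rightarrow> complex) \<Rightarrow> bool" where
  "clockwise \<gamma> \<longleftrightarrow> (\<exists>z. z \<notin> path_image \<gamma> \<and> winding_number \<gamma> z = -1)"

definition left_of :: "(nat \<Rightarrow> nat \<Rightarrow> bool) \<Rightarrow> nat \<Rightarrow> nat \<Rightarrow> nat \<Rightarrow> bool" where
  "left_of up p q r \<longleftrightarrow> counterclockwise (triangle_path up p q r)"

definition right_of :: "(nat \<Rightarrow> nat \<Rightarrow> bool) \<Rightarrow> nat \<Rightarrow> nat \<Rightarrow> nat \<Rightarrow> bool" where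
  "right_of up p q r \<longleftrightarrow> clockwise (triangle_path up p q r)"

definition is_k_edge :: "nat \<Rightarrow> (nat \<Rightarrow> nat \<Rightarrow> bool) \<Rightarrow> nat \<Rightarrow> nat \<Rightarrow> nat \<Rightarrow> bool" where
  "is_k_edge n up p q k \<longleftrightarrow>
     card {r \<in> {1..n} - {p, q}. left_of up p q r} = k \<or>
     card {r \<in> {1..n} - {p, q}. right_of up p q r} = k"

end

theory Submission
  imports Defs
begin

text \<open>For a point z off the real axis, the winding number of an upper (lower) semicircle over
  [a,b] differs from that of the chord [a,b] by -1 (+1) exactly when z lies in the upper (lower)
  half of the disc with diameter [a,b]. The chords of a triangle on the real axis wind zero times
  around z, so the winding number of the triangle ijr around z is a signed count of the half-discs
  containing z. As these discs are nested or disjoint according to the positions of i, j, r on the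
  axis, the triangle is counterclockwise (clockwise) precisely when r lies to the right of j with
  ir of the colour of ij, or to the left of i with rj of that colour.\<close>

subsection \<open>Discs with a diameter on the real axis\<close>

text \<open>The power of z with respect to the circle with diameter [a,b]: negative inside it.\<close>
definition circle_power :: "nat \<Rightarrow> nat \<Rightarrow> complex \<Rightarrow> real" where
  "circle_power a b z = (Re z - real a) * (Re z - real b) + (Im z)\<^sup>2"

lemma circle_power_commute: "circle_power a b z = circle_power b a z"
  by (simp add: circle_power_def algebra_simps)

lemma circle_power_eq_norm:
  "circle_power a b z = (cmod (z - (of_nat a + of_nat b) / 2))\<^sup>2 - ((real b - real a) / 2)\<^sup>2"
  unfolding circle_power_def cmod_power2 by (simp add: power2_eq_square field_simps)

lemma circle_power_neg_imp_between:
  assumes "a \<le> b" "circle_power a b z < 0"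
  shows "real a < Re z" "Re z < real b"
proof -
  have "(Re z - real a) * (Re z - real b) < 0"
    using assms(2) unfolding circle_power_def by (smt (verit) zero_le_power2)
  then show "real a < Re z" "Re z < real b" using assms(1) by (auto simp: mult_less_0_iff)
qed

lemma circle_power_neg_extend_right:
  assumes "a < b" "b < c" "circle_power a b z < 0"
  shows "circle_power a c z < 0"
proof -
  have "real a < Re z" "Re z < real b"
    using circle_power_neg_imp_between[OF less_imp_le[OF assms(1)] assms(3)] by auto
  then have "(Re z - real a) * (Re z - real c) < (Re z - real a) * (Re z - real b)"
    using assms by (intro mult_strict_left_mono) auto
  then show ?thesis using assms(3) unfolding circle_power_def by linarith
qed

lemma circle_power_neg_extend_left:
  assumes "a < b" "b < c" "circle_power b c z < 0"
  shows "circle_power a c z < 0"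
proof -
  have "real b < Re z" "Re z < real c"
    using circle_power_neg_imp_between[OF less_imp_le[OF assms(2)] assms(3)] by auto
  then have "(Re z - real a) * (Re z - real c) < (Re z - real b) * (Re z - real c)"
    using assms by (intro mult_strict_right_mono_neg) auto
  then show ?thesis using assms(3) unfolding circle_power_def by linarith
qed

lemma circle_power_neg_adjacent_disjoint:
  assumes "a < b" "b < c" "circle_power a b z < 0" "circle_power b c z < 0"
  shows False
  using circle_power_neg_imp_between[of a b z] circle_power_neg_imp_between[of b c z] assms by auto

lemma circle_power_above_inner_point:
  assumes "a < m" "m < b" "y\<^sup>2 < 1"
  shows "circle_power a b (Complex (real m) y) < 0"
    and "circle_power a m (Complex (real m) y) = y\<^sup>2" "circle_power m b (Complex (real m) y) = y\<^sup>2"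
proof -
  have "(real m - real a) * (real b - real m) \<ge> 1 * 1"
    using assms by (intro mult_mono) auto
  then show "circle_power a b (Complex (real m) y) < 0"
    using assms(3) by (auto simp: circle_power_def algebra_simps)
qed (simp_all add: circle_power_def)

lemma finite_vertical_circle_hits: "finite {t::real. circle_power a b (z + of_real t * \<i>) = 0}"
proof -
  define C where "C = - ((Re z - real a) * (Re z - real b))"
  have "{t::real. circle_power a b (z + of_real t * \<i>) = 0} \<subseteq> {- Im z + sqrt C, - Im z - sqrt C}"
  proof
    fix t assume "t \<in> {t::real. circle_power a b (z + of_real t * \<i>) = 0}"
    then have "(Im z + t)\<^sup>2 = C" by (simp add: circle_power_def C_def algebra_simps)
    then have "sqrt C = \<bar>Im z + t\<bar>" using real_sqrt_abs by metis
    then show "t \<in> {- Im z + sqrt C, - Im z - sqrt C}" by (auto simp: abs_if split: if_splits)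
  qed
  then show ?thesis by (rule finite_subset) simp
qed

definition half_disc :: "bool \<Rightarrow> nat \<Rightarrow> nat \<Rightarrow> complex set" where
  "half_disc upper a b = {w. circle_power a b w \<le> 0 \<and> (if upper then 0 \<le> Im w else Im w \<le> 0)}"

lemma convex_half_disc:
  assumes "a \<le> b"
  shows "convex (half_disc upper a b)"
proof -
  define c :: complex where "c = (of_nat a + of_nat b) / 2"
  define R where "R = (real b - real a) / 2"
  have "R \<ge> 0" using assms by (simp add: R_def)
  have "circle_power a b w \<le> 0 \<longleftrightarrow> w \<in> cball c R" for w
  proof -
    have "w \<in> cball c R \<longleftrightarrow> cmod (w - c) \<le> R" by (simp add: dist_norm norm_minus_commute)
    also have "\<dots> \<longleftrightarrow> (cmod (w - c))\<^sup>2 \<le> R\<^sup>2"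
      using \<open>R \<ge> 0\<close> by (simp add: power2_le_iff_abs_le)
    also have "\<dots> \<longleftrightarrow> circle_power a b w \<le> 0"
      unfolding c_def R_def circle_power_eq_norm by simp
    finally show ?thesis by simp
  qed
  then have "half_disc upper a b = cball c R \<inter> {w. if upper then 0 \<le> Im w else Im w \<le> 0}"
    unfolding half_disc_def by blast
  then show ?thesis
    by (cases upper) (simp_all add: convex_Int convex_halfspace_Im_ge convex_halfspace_Im_le)
qed

lemma real_segment_Im_zero: "w \<in> closed_segment (of_nat a :: complex) (of_nat b) \<Longrightarrow> Im w = 0"
  by (auto simp: closed_segment_def)

lemma real_segment_subset_half_disc:
  assumes "a \<le> b"
  shows "closed_segment (of_nat a) (of_nat b) \<subseteq> half_disc upper a b"
  by (rule closed_segment_subset[OF _ _ convex_half_disc[OF assms]])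
    (auto simp: half_disc_def circle_power_def)

subsection \<open>Semicircles\<close>

lemma path_semicircle: "path (semicircle u a b)"
  unfolding path_def semicircle_def by (cases u) (auto intro!: continuous_intros)

lemma pathstart_semicircle [simp]: "pathstart (semicircle u a b) = of_nat a"
  by (simp add: pathstart_def semicircle_def field_simps)

lemma pathfinish_semicircle [simp]: "pathfinish (semicircle u a b) = of_nat b"
  by (auto simp add: pathfinish_def semicircle_def field_simps exp_pi_i' exp_minus)

lemma circle_power_semicircle: "circle_power a b (semicircle u a b t) = 0"
proof -
  have "complex_of_nat b - complex_of_nat a = of_real (real b - real a)" by simp
  then have "cmod (semicircle u a b t - (of_nat a + of_nat b) / 2) = \<bar>real b - real a\<bar> / 2"
    by (simp add: semicircle_def norm_mult norm_divide del: of_real_diff)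
  then have "(cmod (semicircle u a b t - (of_nat a + of_nat b) / 2))\<^sup>2 = (\<bar>real b - real a\<bar> / 2)\<^sup>2"
    by simp
  then show ?thesis by (simp add: circle_power_eq_norm power_divide)
qed

lemma path_image_semicircle:
  assumes "a \<le> b"
  shows "path_image (semicircle u a b) \<subseteq> {w. circle_power a b w = 0 \<and> (if u then Im w \<ge> 0 else Im w \<le> 0)}"
proof
  fix w assume "w \<in> path_image (semicircle u a b)"
  then obtain t where t: "t \<in> {0..1}" "w = semicircle u a b t" by (auto simp: path_image_def)
  have "sin (pi * t) \<ge> 0" using t by (intro sin_ge_zero) auto
  then have "if u then Im w \<ge> 0 else Im w \<le> 0"
    using assms t by (auto simp add: semicircle_def Im_exp Re_exp mult_nonneg_nonneg)
  then show "w \<in> {w. circle_power a b w = 0 \<and> (if u then Im w \<ge> 0 else Im w \<le> 0)}"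
    using t circle_power_semicircle by auto
qed

lemma semicircle_join_reversepath:
  "semicircle True a b +++ reversepath (semicircle False a b) =
     shiftpath (1/2) (reversepath (circlepath ((of_nat a + of_nat b) / 2) ((real b - real a) / 2)))"
proof
  fix t :: real
  have first_half: "exp (2 * of_real pi * \<i> * (1 / 2 - of_real t)) =
      - exp (- (\<i> * (of_real pi * (2 * of_real t))))"
  proof -
    have "2 * of_real pi * \<i> * (1 / 2 - of_real t) =
        of_real pi * \<i> + (- (\<i> * (of_real pi * (2 * of_real t))))"
      by (simp add: algebra_simps)
    then show ?thesis by (simp only: exp_add) (simp add: exp_pi_i')
  qed
  have second_half: "exp (2 * of_real pi * \<i> * (3 / 2 - of_real t)) =
      - exp (\<i> * (of_real pi * (2 - 2 * of_real t)))"
  proof -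
    have "2 * of_real pi * \<i> * (3 / 2 - of_real t) =
        of_real pi * \<i> + (\<i> * (of_real pi * (2 - 2 * of_real t)))"
      by (simp add: algebra_simps)
    then show ?thesis by (simp only: exp_add) (simp add: exp_pi_i')
  qed
  show "(semicircle True a b +++ reversepath (semicircle False a b)) t =
      shiftpath (1/2) (reversepath (circlepath ((of_nat a + of_nat b) / 2) ((real b - real a) / 2))) t"
    by (cases "t \<le> 1/2")
      (simp_all add: joinpaths_def shiftpath_def reversepath_def semicircle_def circlepath
        first_half second_half)
qed

lemma winding_number_semicircle_outside_half_disc:
  assumes "a < b" "Im z \<noteq> 0" "circle_power a b z \<noteq> 0" "z \<notin> half_disc u a b"
  shows "winding_number (semicircle u a b) z = winding_number (linepath (of_nat a) (of_nat b)) z"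
proof -
  let ?s = "semicircle u a b" and ?l = "linepath (of_nat a :: complex) (of_nat b)"
  have z_s: "z \<notin> path_image ?s" using path_image_semicircle[of a b u] assms by auto
  have z_l: "z \<notin> path_image ?l" using assms(2) real_segment_Im_zero by auto
  have "winding_number (?s +++ reversepath ?l) z = 0"
  proof (rule winding_number_zero_outside[OF _ convex_half_disc _ assms(4)])
    show "a \<le> b" using assms(1) by simp
    show "path (?s +++ reversepath ?l)" by (simp add: path_semicircle)
    show "pathfinish (?s +++ reversepath ?l) = pathstart (?s +++ reversepath ?l)" by simp
    show "path_image (?s +++ reversepath ?l) \<subseteq> half_disc u a b"
      using path_image_semicircle[of a b u] assms(1) real_segment_subset_half_disc[of a b u]
      by (subst path_image_join) (auto simp: half_disc_def closed_segment_commute)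
  qed
  moreover have "winding_number (?s +++ reversepath ?l) z = winding_number ?s z - winding_number ?l z"
    using z_s z_l by (simp add: winding_number_join winding_number_reversepath path_semicircle
        closed_segment_commute del: reversepath_linepath)
  ultimately show ?thesis by simp
qed

lemma winding_number_semicircles_inside_disc:
  assumes "a < b" "Im z \<noteq> 0" "circle_power a b z < 0"
  shows "winding_number (semicircle True a b) z - winding_number (semicircle False a b) z = -1"
proof -
  define c :: complex where "c = (of_nat a + of_nat b) / 2"
  define R where "R = (real b - real a) / 2"
  have "R > 0" using assms(1) by (simp add: R_def)
  have "(cmod (z - c))\<^sup>2 < R\<^sup>2" using assms(3) by (simp add: circle_power_eq_norm c_def R_def)
  then have inside: "cmod (z - c) < R" using \<open>R > 0\<close> by (simp add: power_less_imp_less_base)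
  then have z_c: "z \<notin> path_image (circlepath c R)" by (auto simp: dist_norm norm_minus_commute)
  have z_s: "z \<notin> path_image (semicircle u a b)" for u
    using path_image_semicircle[of a b u] assms by auto
  have "winding_number (semicircle True a b) z - winding_number (semicircle False a b) z =
      winding_number (semicircle True a b +++ reversepath (semicircle False a b)) z"
    using z_s by (simp add: winding_number_join winding_number_reversepath path_semicircle)
  also have "\<dots> = winding_number (shiftpath (1/2) (reversepath (circlepath c R))) z"
    by (simp add: semicircle_join_reversepath c_def R_def)
  also have "\<dots> = - winding_number (circlepath c R) z"
    using z_c by (simp add: winding_number_shiftpath winding_number_reversepath)
  also have "\<dots> = -1" using winding_number_circlepath[of z c R] inside by (simp add: norm_minus_commute)
  finally show ?thesis .
qed

text \<open>The correction by which a semicircle over [a,b] winds around z more than its chord does.\<close>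
definition semicircle_index :: "bool \<Rightarrow> nat \<Rightarrow> nat \<Rightarrow> complex \<Rightarrow> int" where
  "semicircle_index upper a b z =
     (if upper then (if Im z > 0 \<and> circle_power a b z < 0 then -1 else 0)
      else (if Im z < 0 \<and> circle_power a b z < 0 then 1 else 0))"

lemma winding_number_semicircle:
  assumes "a < b" "Im z \<noteq> 0" "circle_power a b z \<noteq> 0"
  shows "winding_number (semicircle u a b) z =
    winding_number (linepath (of_nat a) (of_nat b)) z + of_int (semicircle_index u a b z)"
proof (cases "z \<in> half_disc u a b")
  case True
  then have "z \<notin> half_disc (\<not> u) a b" and inside: "circle_power a b z < 0"
    using assms by (auto simp: half_disc_def split: if_splits)
  then have chord: "winding_number (semicircle (\<not> u) a b) z =
      winding_number (linepath (of_nat a) (of_nat b)) z"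
    using winding_number_semicircle_outside_half_disc[OF assms] by blast
  have index: "semicircle_index u a b z = (if u then -1 else 1)"
    using True inside assms(2) by (auto simp: semicircle_index_def half_disc_def split: if_splits)
  have diff: "winding_number (semicircle True a b) z - winding_number (semicircle False a b) z = -1"
    by (rule winding_number_semicircles_inside_disc[OF assms(1,2) inside])
  show ?thesis
  proof (cases u)
    case True
    have "winding_number (semicircle True a b) z =
        winding_number (semicircle False a b) z + (winding_number (semicircle True a b) z
          - winding_number (semicircle False a b) z)" by simp
    then show ?thesis using True chord index diff by simp
  next
    case False
    have "winding_number (semicircle False a b) z =
        winding_number (semicircle True a b) z - (winding_number (semicircle True a b) z
          - winding_number (semicircle False a b) z)" by simp
    then show ?thesis using False chord index diff by simp
  qed
next
  case False
  then have "semicircle_index u a b z = 0"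
    by (cases u) (auto simp: semicircle_index_def half_disc_def)
  then show ?thesis using winding_number_semicircle_outside_half_disc[OF assms False] by simp
qed

subsection \<open>Winding numbers of triangles of the drawing\<close>

definition arc_index :: "(nat \<Rightarrow> nat \<Rightarrow> bool) \<Rightarrow> nat \<Rightarrow> nat \<Rightarrow> complex \<Rightarrow> int" where
  "arc_index up a b z = (if b = Suc a then 0 else semicircle_index (up a b) a b z)"

definition edge_index :: "(nat \<Rightarrow> nat \<Rightarrow> bool) \<Rightarrow> nat \<Rightarrow> nat \<Rightarrow> complex \<Rightarrow> int" where
  "edge_index up p q z = (if p < q then arc_index up p q z else - arc_index up q p z)"

definition triangle_index :: "(nat \<Rightarrow> nat \<Rightarrow> bool) \<Rightarrow> nat \<Rightarrow> nat \<Rightarrow> nat \<Rightarrow> complex \<Rightarrow> int" where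
  "triangle_index up p q r z = edge_index up p q z + edge_index up q r z + edge_index up r p z"

definition generic_point :: "nat \<Rightarrow> nat \<Rightarrow> nat \<Rightarrow> complex \<Rightarrow> bool" where
  "generic_point p q r z \<longleftrightarrow>
     Im z \<noteq> 0 \<and> circle_power p q z \<noteq> 0 \<and> circle_power q r z \<noteq> 0 \<and> circle_power r p z \<noteq> 0"

lemma edge_path_props:
  assumes "p \<noteq> q"
  shows "path (edge_path up p q)" "pathstart (edge_path up p q) = of_nat p"
    "pathfinish (edge_path up p q) = of_nat q"
    "path_image (edge_path up p q) \<subseteq> {w. Im w = 0 \<or> circle_power p q w = 0}"
proof -
  have arc: "path (edge_arc up a b) \<and> pathstart (edge_arc up a b) = of_nat a
      \<and> pathfinish (edge_arc up a b) = of_nat b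
      \<and> path_image (edge_arc up a b) \<subseteq> {w. Im w = 0 \<or> circle_power a b w = 0}" if "a < b" for a b
    using path_image_semicircle[of a b "up a b"] that real_segment_Im_zero[of _ a b]
    by (auto simp: edge_arc_def path_semicircle)
  have "{w. Im w = 0 \<or> circle_power q p w = 0} = {w. Im w = 0 \<or> circle_power p q w = 0}"
    using circle_power_commute by auto
  then show "path (edge_path up p q)" "pathstart (edge_path up p q) = of_nat p"
    "pathfinish (edge_path up p q) = of_nat q"
    "path_image (edge_path up p q) \<subseteq> {w. Im w = 0 \<or> circle_power p q w = 0}"
    using arc[of p q] arc[of q p] assms by (auto simp: edge_path_def linorder_neq_iff)
qed

lemma winding_number_edge_arc:
  assumes "a < b" "Im z \<noteq> 0" "circle_power a b z \<noteq> 0"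
  shows "winding_number (edge_arc up a b) z =
    winding_number (linepath (of_nat a) (of_nat b)) z + of_int (arc_index up a b z)"
  using winding_number_semicircle[OF assms] by (simp add: edge_arc_def arc_index_def)

lemma winding_number_edge_path:
  assumes "p \<noteq> q" "Im z \<noteq> 0" "circle_power p q z \<noteq> 0"
  shows "winding_number (edge_path up p q) z =
    winding_number (linepath (of_nat p) (of_nat q)) z + of_int (edge_index up p q z)"
proof (cases "p < q")
  case True
  then show ?thesis
    using winding_number_edge_arc[OF True assms(2,3)] by (simp add: edge_path_def edge_index_def)
next
  case False
  then have "q < p" using assms(1) by simp
  have "z \<notin> closed_segment (of_nat q :: complex) (of_nat p)"
    using assms(2) real_segment_Im_zero by auto
  then have chord: "winding_number (linepath (of_nat p) (of_nat q)) z =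
      - winding_number (linepath (of_nat q) (of_nat p)) z"
    using winding_number_reversepath[of "linepath (of_nat q :: complex) (of_nat p)" z] by simp
  have "z \<notin> path_image (edge_arc up q p)"
    using edge_path_props(4)[of q p up] \<open>q < p\<close> assms(2,3)
    by (auto simp: edge_path_def circle_power_commute)
  then have "winding_number (edge_path up p q) z = - winding_number (edge_arc up q p) z"
    using edge_path_props(1)[of q p up] \<open>q < p\<close> False
    by (simp add: edge_path_def winding_number_reversepath)
  then show ?thesis
    using winding_number_edge_arc[OF \<open>q < p\<close> assms(2)] assms(3) chord False
    by (simp add: edge_index_def circle_power_commute)
qed

lemma triangle_path_props:
  assumes "p \<noteq> q" "q \<noteq> r" "r \<noteq> p"
  shows "path (triangle_path up p q r)"
    "pathfinish (triangle_path up p q r) = pathstart (triangle_path up p q r)"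
    "path_image (triangle_path up p q r) \<subseteq>
      {w. Im w = 0 \<or> circle_power p q w = 0 \<or> circle_power q r w = 0 \<or> circle_power r p w = 0}"
  using edge_path_props[OF assms(1), of up] edge_path_props[OF assms(2), of up]
    edge_path_props[OF assms(3), of up]
  by (auto simp: triangle_path_def path_image_join)

lemma winding_number_real_triangle:
  assumes "Im z \<noteq> 0"
  shows "winding_number (linepath (of_nat p) (of_nat q)) z + winding_number (linepath (of_nat q) (of_nat r)) z
      + winding_number (linepath (of_nat r) (of_nat p)) z = 0"
proof -
  define T where "T = linepath (of_nat p :: complex) (of_nat q) +++ linepath (of_nat q) (of_nat r)
      +++ linepath (of_nat r) (of_nat p)"
  have "z \<notin> closed_segment (of_nat a :: complex) (of_nat b)" for a b
    using assms real_segment_Im_zero by blast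
  then have "winding_number T z = winding_number (linepath (of_nat p) (of_nat q)) z
      + (winding_number (linepath (of_nat q) (of_nat r)) z + winding_number (linepath (of_nat r) (of_nat p)) z)"
    unfolding T_def by (simp add: winding_number_join path_image_join)
  moreover have "winding_number T z = 0"
  proof (rule winding_number_zero_outside[of _ "{w. Im w = 0}"])
    show "convex {w. Im w = (0::real)}"
      using convex_hyperplane[of "\<i>" 0] by (simp add: inner_complex_def)
    show "path T" "pathfinish T = pathstart T" by (simp_all add: T_def)
    show "z \<notin> {w. Im w = 0}" using assms by simp
    show "path_image T \<subseteq> {w. Im w = 0}"
      unfolding T_def using real_segment_Im_zero by (fastforce simp: path_image_join)
  qed
  ultimately show ?thesis by (simp add: algebra_simps)
qed

lemma winding_number_triangle_path:
  assumes "p \<noteq> q" "q \<noteq> r" "r \<noteq> p" "generic_point p q r z"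
  shows "z \<notin> path_image (triangle_path up p q r)"
    "winding_number (triangle_path up p q r) z = of_int (triangle_index up p q r z)"
proof -
  note generic = assms(4)[unfolded generic_point_def]
  note e1 = edge_path_props[OF assms(1), of up] and e2 = edge_path_props[OF assms(2), of up]
    and e3 = edge_path_props[OF assms(3), of up]
  show "z \<notin> path_image (triangle_path up p q r)"
    using triangle_path_props(3)[OF assms(1-3), of up] generic by auto
  have "z \<notin> path_image (edge_path up p q)" "z \<notin> path_image (edge_path up q r)"
    "z \<notin> path_image (edge_path up r p)"
    using e1(4) e2(4) e3(4) generic by auto
  then have "winding_number (triangle_path up p q r) z = winding_number (edge_path up p q) z
      + (winding_number (edge_path up q r) z + winding_number (edge_path up r p) z)"
    unfolding triangle_path_def using e1 e2 e3 by (simp add: winding_number_join path_image_join)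
  also have "\<dots> = of_int (triangle_index up p q r z)"
    using winding_number_edge_path[OF assms(1)] winding_number_edge_path[OF assms(2)]
      winding_number_edge_path[OF assms(3)] winding_number_real_triangle[of z p q r] generic
    by (simp add: triangle_index_def algebra_simps)
  finally show "winding_number (triangle_path up p q r) z = of_int (triangle_index up p q r z)" .
qed

text \<open>Winding numbers are locally constant, and near any point almost every point of a vertical
  segment is generic.\<close>
lemma exists_generic_point_same_winding_number:
  assumes "path \<gamma>" "pathfinish \<gamma> = pathstart \<gamma>" "z \<notin> path_image \<gamma>"
  shows "\<exists>z'. generic_point p q r z' \<and> z' \<notin> path_image \<gamma> \<and> winding_number \<gamma> z' = winding_number \<gamma> z"
proof -
  define S where "S = {w. w \<notin> path_image \<gamma> \<and> winding_number \<gamma> w = winding_number \<gamma> z}"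
  have "open S" unfolding S_def by (rule open_winding_number_levelsets[OF assms(1,2)])
  moreover have "z \<in> S" using assms(3) by (simp add: S_def)
  ultimately obtain e where e: "e > 0" "ball z e \<subseteq> S" by (rule openE)
  define B where "B = {t::real. Im (z + of_real t * \<i>) = 0} \<union> {t. circle_power p q (z + of_real t * \<i>) = 0}
     \<union> {t. circle_power q r (z + of_real t * \<i>) = 0} \<union> {t. circle_power r p (z + of_real t * \<i>) = 0}"
  have "{t::real. Im (z + of_real t * \<i>) = 0} \<subseteq> {- Im z}" by auto
  then have "finite B" unfolding B_def using finite_vertical_circle_hits finite_subset by blast
  moreover have "infinite {0<..<e}" using e by simp
  ultimately obtain t where t: "t \<in> {0<..<e}" "t \<notin> B"
    by (metis Diff_iff ex_in_conv finite.emptyI Diff_infinite_finite)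
  then have "z + of_real t * \<i> \<in> S" using e by (auto simp: dist_norm norm_mult)
  moreover have "generic_point p q r (z + of_real t * \<i>)" using t by (simp add: generic_point_def B_def)
  ultimately show ?thesis by (auto simp: S_def)
qed

lemma winds_iff_generic_triangle_index:
  assumes "p \<noteq> q" "q \<noteq> r" "r \<noteq> p"
  shows "(\<exists>z. z \<notin> path_image (triangle_path up p q r) \<and>
        winding_number (triangle_path up p q r) z = of_int k) \<longleftrightarrow> (\<exists>z. generic_point p q r z \<and> triangle_index up p q r z = k)"
proof
  assume "\<exists>z. z \<notin> path_image (triangle_path up p q r) \<and>
    winding_number (triangle_path up p q r) z = of_int k"
  then obtain z where "generic_point p q r z" "winding_number (triangle_path up p q r) z = of_int k"
    using exists_generic_point_same_winding_number[OF triangle_path_props(1,2)[OF assms]] by metis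
  then show "\<exists>z. generic_point p q r z \<and> triangle_index up p q r z = k"
    using winding_number_triangle_path(2)[OF assms] by auto
qed (use winding_number_triangle_path[OF assms, where up = up] in blast)

lemma left_of_iff_triangle_index:
  assumes "p \<noteq> q" "q \<noteq> r" "r \<noteq> p"
  shows "left_of up p q r \<longleftrightarrow> (\<exists>z. generic_point p q r z \<and> triangle_index up p q r z = 1)"
  using winds_iff_generic_triangle_index[OF assms, of up 1]
  by (simp add: left_of_def counterclockwise_def)

lemma right_of_iff_triangle_index:
  assumes "p \<noteq> q" "q \<noteq> r" "r \<noteq> p"
  shows "right_of up p q r \<longleftrightarrow> (\<exists>z. generic_point p q r z \<and> triangle_index up p q r z = -1)"
  using winds_iff_generic_triangle_index[OF assms, of up "-1"]
  by (simp add: right_of_def clockwise_def)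

subsection \<open>Which side of ij a vertex lies on\<close>

lemma triangle_index_unit_imp_same_colour:
  assumes "i < j" "r \<noteq> i" "r \<noteq> j" "blue up i j = c" "generic_point i j r z"
    and "triangle_index up i j r z = (if c then 1 else -1)"
  shows "(j < r \<and> blue up i r = c) \<or> (r < i \<and> blue up r j = c)"
proof -
  have sym: "circle_power j i z = circle_power i j z" "circle_power r j z = circle_power j r z"
    "circle_power i r z = circle_power r i z" using circle_power_commute by auto
  note index_defs = triangle_index_def edge_index_def arc_index_def semicircle_index_def blue_def
  consider "j < r" | "r < i" | "i < r" "r < j" using assms(1-3) by linarith
  then show ?thesis
  proof cases
    case 1
    note circle_power_neg_extend_left[OF assms(1) 1, of z]
    then show ?thesis using 1 assms sym
      by (cases c) (auto simp: index_defs split: if_splits)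
  next
    case 2
    note circle_power_neg_extend_right[OF 2 assms(1), of z]
    then show ?thesis using 2 assms sym
      by (cases c) (auto simp: index_defs split: if_splits)
  next
    case 3
    note circle_power_neg_extend_left[OF 3, of z] circle_power_neg_extend_right[OF 3, of z]
      circle_power_neg_adjacent_disjoint[OF 3, of z]
    then show ?thesis using 3 assms sym
      by (cases c) (auto simp: index_defs split: if_splits)
  qed
qed

text \<open>The witness sits just above or below the vertex between r and the other endpoint.\<close>
lemma same_colour_imp_triangle_index_unit:
  assumes "i < j" "(j < r \<and> blue up i r = c) \<or> (r < i \<and> blue up r j = c)"
  shows "\<exists>z. generic_point i j r z \<and> triangle_index up i j r z = (if c then 1 else -1)"
proof -
  define y :: real where "y = (if c then 1/2 else -1/2)"
  have y: "y\<^sup>2 < 1" "y \<noteq> 0" by (simp_all add: y_def power2_eq_square)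
  note index_defs = triangle_index_def edge_index_def arc_index_def semicircle_index_def blue_def
  from assms(2) show ?thesis
  proof (elim disjE conjE)
    assume "j < r" "blue up i r = c"
    let ?z = "Complex (real j) y"
    have "circle_power i j ?z > 0" "circle_power j r ?z > 0" "circle_power i r ?z < 0"
      "circle_power r i ?z < 0"
      using circle_power_above_inner_point[OF assms(1) \<open>j < r\<close> y(1)] y(2)
      by (simp_all add: circle_power_commute[of r i])
    then show ?thesis
      using \<open>j < r\<close> \<open>blue up i r = c\<close> assms(1) y(2)
      by (intro exI[of _ ?z]) (cases c; auto simp: generic_point_def index_defs y_def)
  next
    assume "r < i" "blue up r j = c"
    let ?z = "Complex (real i) y"
    have "circle_power i j ?z > 0" "circle_power r i ?z > 0" "circle_power r j ?z < 0"
      "circle_power j r ?z < 0"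
      using circle_power_above_inner_point[OF \<open>r < i\<close> assms(1) y(1)] y(2)
      by (simp_all add: circle_power_commute[of j r])
    then show ?thesis
      using \<open>r < i\<close> \<open>blue up r j = c\<close> assms(1) y(2)
      by (intro exI[of _ ?z]) (cases c; auto simp: generic_point_def index_defs y_def)
  qed
qed

lemma side_of_edge_iff_same_colour:
  assumes "i < j" "r \<noteq> i" "r \<noteq> j"
  shows "(if blue up i j then left_of up i j r else right_of up i j r) \<longleftrightarrow>
    (j < r \<and> (blue up i r \<longleftrightarrow> blue up i j)) \<or> (r < i \<and> (blue up r j \<longleftrightarrow> blue up i j))"
proof -
  have distinct: "i \<noteq> j" "j \<noteq> r" "r \<noteq> i" using assms by auto
  have "(\<exists>z. generic_point i j r z \<and> triangle_index up i j r z = (if blue up i j then 1 else -1)) \<longleftrightarrow>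
    (j < r \<and> (blue up i r \<longleftrightarrow> blue up i j)) \<or> (r < i \<and> (blue up r j \<longleftrightarrow> blue up i j))"
  proof
    assume "\<exists>z. generic_point i j r z \<and> triangle_index up i j r z = (if blue up i j then 1 else -1)"
    then obtain z where "generic_point i j r z"
      "triangle_index up i j r z = (if blue up i j then 1 else -1)" by blast
    then show "(j < r \<and> (blue up i r \<longleftrightarrow> blue up i j)) \<or> (r < i \<and> (blue up r j \<longleftrightarrow> blue up i j))"
      by (rule triangle_index_unit_imp_same_colour[OF assms refl])
  qed (rule same_colour_imp_triangle_index_unit[OF assms(1)])
  then show ?thesis
    using left_of_iff_triangle_index[OF distinct, of up] right_of_iff_triangle_index[OF distinct, of up]
    by (cases "blue up i j") simp_all
qed

theorem lemma3:
  fixes n i j :: nat and up :: "nat \<Rightarrow> nat \<Rightarrow> bool"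
  assumes "normalized_book_drawing n up"
    and "1 \<le> i" and "i < j" and "j \<le> n"
  shows "is_k_edge n up i j
           (card {j'. j < j' \<and> j' \<le> n \<and> (blue up i j' \<longleftrightarrow> blue up i j)}
          + card {i'. 1 \<le> i' \<and> i' < i \<and> (blue up i' j \<longleftrightarrow> blue up i j)})"
proof -
  define R where "R = {j'. j < j' \<and> j' \<le> n \<and> (blue up i j' \<longleftrightarrow> blue up i j)}"
  define L where "L = {i'. 1 \<le> i' \<and> i' < i \<and> (blue up i' j \<longleftrightarrow> blue up i j)}"
  have "r \<in> {r \<in> {1..n} - {i, j}. if blue up i j then left_of up i j r else right_of up i j r}
      \<longleftrightarrow> r \<in> R \<union> L" for r
    using side_of_edge_iff_same_colour[OF assms(3), where r = r and up = up] assms(2-4)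
    by (cases "r = i \<or> r = j") (auto simp: R_def L_def)
  then have "{r \<in> {1..n} - {i, j}. if blue up i j then left_of up i j r else right_of up i j r} = R \<union> L"
    by blast
  moreover have "card (R \<union> L) = card R + card L"
    by (rule card_Un_disjoint) (use assms(3) in \<open>auto simp: R_def L_def\<close>)
  ultimately show ?thesis
    unfolding is_k_edge_def R_def L_def by (cases "blue up i j") auto
qed

end
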